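(* For every $\sigma\in S_t$, the pattern set $\{(\sigma,[t-1])\}$ (the consecutive pattern $\sigma$) admits a finite enumeration scheme of depth $t$ in which every reversibly deletable set $R_p$ is either $\emptyset$ or $\{1\}$.
   Context: Vincular pattern $(\sigma,X)$, $\sigma\in S_\ell$, $X\subseteq[\ell-1]$: $\pi$ contains it if some subsequence $\pi_{i_1}\cdots\pi_{i_\ell}$ ($i_1<\dots<i_\ell$) is order-isomorphic to $\sigma$ with $i_{x+1}=i_x+1$ for $x\in X$. For $p\in S_k$ and $w\in[n]^k$ with distinct letters order-isomorphic to $p$, $S_n^B(p;w)$ is the set of $B$-avoiding $\pi\in S_n$ with $\pi_i=w_i$ ($i\le k$). Spacing vector $\vec g(n,w)$: $i$-th component $c_i-c_{i-1}-1$, $c_i$ the $i$-th smallest letter of $w$, $c_0=0,c_{k+1}=n+1$. $\vec v\in\mathbb{N}^{k+1}$ is a gap vector for $p$ w.r.t. $B$ if $S_n^B(p;w)=\emptyset$ whenever $\vec g(n,w)\ge\vec v$ componentwise. $d_R$ deletes the entries in positions $R$ and reduces (for words: subtract from each remaining letter the number of deleted letters smaller than it). $R\subseteq[k]$ is reversibly deletable for $p$ w.r.t. $B$ if, for every $n$ and $w$ with $S_n^B(p;w)\ne\emptyset$, $d_R$ is a bijection $S_n^B(p;w)\to S_{n-|R|}^B(d_R(p);d_R(w))$. A child of $p\in S_k$ is any $p'\in S_{k+1}$ with $p'_1\cdots p'_k$ order-isomorphic to $p$. An enumeration scheme for $B$ is a set $E$ of triples $(p,G_p,R_p)$, $p$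 a permutation, $G_p$ a set of gap vectors for $p$ w.r.t. $B$, $R_p$ a reversibly deletable set for $p$ w.r.t. $B$, such that: $(\epsilon,\emptyset,\emptyset)\in E$ ($\epsilon$ the empty permutation); if $(p,G_p,R_p)\in E$ with $R_p=\emptyset$ and $\vec 0\notin G_p$ then every child of $p$ occurs as the first entry of a triple in $E$; if $R_p\ne\emptyset$ then $d_{R_p}(p)$ occurs as the first entry of a triple in $E$. Its depth is the maximum length of a $p$ occurring in $E$. *)

theory Defs
  imports Main
begin

text \<open>Permutations and words are lists of natural numbers; letters are
1-based (a permutation of length n has letter set {1..n}); positions in the paper are
1-based, so position i corresponds to list index i-1.\<close>

definition is_perm :: "nat \<Rightarrow> nat list \<Rightarrow> bool" where
  "is_perm n \<pi> \<longleftrightarrow> distinct \<pi> \<and> set \<pi> = {1..n}"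

definition order_iso :: "nat list \<Rightarrow> nat list \<Rightarrow> bool" where
  "order_iso a b \<longleftrightarrow> length a = length b \<and>
     (\<forall>i<length a. \<forall>j<length a. (a!i < a!j) = (b!i < b!j))"

text \<open>Vincular pattern (sigma, X) with X a set of 1-based adjacency requirements:
for x in X, i_(x+1) = i_x + 1.  Here idx is the 0-based list of chosen positions.\<close>
definition contains_vinc :: "nat list \<Rightarrow> nat list \<Rightarrow> nat set \<Rightarrow> bool" where
  "contains_vinc \<pi> \<sigma> X \<longleftrightarrow>
     (\<exists>idx. length idx = length \<sigma> \<and> sorted_wrt (<) idx \<and> (\<forall>i\<in>set idx. i < length \<pi>) \<and>
        order_iso (map (\<lambda>i. \<pi>!i) idx) \<sigma> \<and>
        (\<forall>x\<in>X. idx!x = idx!(x-1) + 1))"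

definition avoids :: "(nat list \<times> nat set) set \<Rightarrow> nat list \<Rightarrow> bool" where
  "avoids B \<pi> \<longleftrightarrow> (\<forall>(\<sigma>,X)\<in>B. \<not> contains_vinc \<pi> \<sigma> X)"

definition admissible :: "nat \<Rightarrow> nat list \<Rightarrow> nat list \<Rightarrow> bool" where
  "admissible n p w \<longleftrightarrow> length w = length p \<and> distinct w \<and> set w \<subseteq> {1..n} \<and> order_iso w p"

definition SnB :: "(nat list \<times> nat set) set \<Rightarrow> nat \<Rightarrow> nat list \<Rightarrow> nat list set" where
  "SnB B n w = {\<pi>. is_perm n \<pi> \<and> avoids B \<pi> \<and> take (length w) \<pi> = w}"

definition gvec :: "nat \<Rightarrow> nat list \<Rightarrow> nat list" where
  "gvec n w = (let c = 0 # sort w @ [n+1] in map (\<lambda>i. c!(i+1) - c!i - 1) [0..<length w + 1])"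

definition is_gap_vector :: "(nat list \<times> nat set) set \<Rightarrow> nat list \<Rightarrow> nat list \<Rightarrow> bool" where
  "is_gap_vector B p v \<longleftrightarrow> length v = length p + 1 \<and>
     (\<forall>n w. admissible n p w \<and> list_all2 (\<le>) v (gvec n w) \<longrightarrow> SnB B n w = {})"

text \<open>d_R: delete entries in (1-based) positions R and reduce.\<close>
definition del :: "nat set \<Rightarrow> nat list \<Rightarrow> nat list" where
  "del R xs = (let kept = [xs!i. i \<leftarrow> [0..<length xs], Suc i \<notin> R];
                   gone = [xs!i. i \<leftarrow> [0..<length xs], Suc i \<in> R]
               in map (\<lambda>a. a - length (filter (\<lambda>b. b < a) gone)) kept)"

definition rev_deletable :: "(nat list \<times> nat set) set \<Rightarrow> nat list \<Rightarrow> nat set \<Rightarrow> bool" where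
  "rev_deletable B p R \<longleftrightarrow> R \<subseteq> {1..length p} \<and>
     (\<forall>n w. admissible n p w \<and> SnB B n w \<noteq> {} \<longrightarrow>
        bij_betw (del R) (SnB B n w) (SnB B (n - card R) (del R w)))"

definition is_child :: "nat list \<Rightarrow> nat list \<Rightarrow> bool" where
  "is_child p p' \<longleftrightarrow> is_perm (length p + 1) p' \<and> order_iso (take (length p) p') p"

definition enum_scheme ::
  "(nat list \<times> nat set) set \<Rightarrow> (nat list \<times> nat list set \<times> nat set) set \<Rightarrow> bool" where
  "enum_scheme B E \<longleftrightarrow>
     ([], {}, {}) \<in> E \<and>
     (\<forall>(p,G,R)\<in>E. is_perm (length p) p \<and> (\<forall>v\<in>G. is_gap_vector B p v) \<and> rev_deletable B p R) \<and>
     (\<forall>(p,G,R)\<in>E. R = {} \<and> replicate (length p + 1) 0 \<notin> G \<longrightarrow>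
         (\<forall>p'. is_child p p' \<longrightarrow> (\<exists>G' R'. (p',G',R') \<in> E))) \<and>
     (\<forall>(p,G,R)\<in>E. R \<noteq> {} \<longrightarrow> (\<exists>G' R'. (del R p, G', R') \<in> E))"

definition scheme_depth :: "(nat list \<times> nat list set \<times> nat set) set \<Rightarrow> nat" where
  "scheme_depth E = Max ((\<lambda>(p,G,R). length p) ` E)"

end

theory Submission
  imports Defs
begin

(* The scheme consists of all
   permutations p of length < t with R_p = {}, and all permutations of length t with
   R_p = {1}; no gap vectors are needed.  Children of short prefixes stay in the scheme,
   and deleting the first entry of a length-t prefix yields a length-(t-1) prefix, so the
   scheme is closed; it is finite and has depth t.

   The real content is that R = {1} is reversibly deletable for every prefix pattern p
   of length >= t.  Avoiding (sigma,[t-1]) means avoiding sigma as a factor (consecutive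
   occurrence).  If pi avoids sigma and starts with w, the first entry of pi lies in exactly
   one window of length t, the initial one, which is determined by w and is not an
   occurrence.  Deleting the first entry and reducing (shift_down) preserves the relative
   order of the remaining entries, so pi avoids sigma iff its reduction does; the inverse
   re-inserts the first letter and shifts the larger letters up (shift_up). *)

definition consec_occurs :: "nat list \<Rightarrow> nat list \<Rightarrow> bool" where
  "consec_occurs \<pi> \<sigma> \<longleftrightarrow>
     (\<exists>i. i + length \<sigma> \<le> length \<pi> \<and> order_iso (take (length \<sigma>) (drop i \<pi>)) \<sigma>)"

lemma upt_if_consecutive:
  assumes "\<forall>x\<in>{1..length idx - 1}. idx!x = idx!(x-1) + 1"
  shows "idx = [idx!0..<idx!0 + length idx]"
proof (rule nth_equalityI)
  fix k assume "k < length idx"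
  then show "idx!k = [idx!0..<idx!0 + length idx]!k"
  proof (induction k)
    case (Suc k)
    then have "idx ! Suc k = idx ! k + 1" using assms by force
    with Suc show ?case by simp
  qed simp
qed simp

lemma map_nth_upt_window:
  assumes "i + t \<le> length \<pi>"
  shows "map ((!) \<pi>) [i..<i+t] = take t (drop i \<pi>)"
  using assms by (intro nth_equalityI) auto

lemma contains_consec_iff:
  "contains_vinc \<pi> \<sigma> {1..length \<sigma> - 1} \<longleftrightarrow> consec_occurs \<pi> \<sigma>"
proof
  assume "contains_vinc \<pi> \<sigma> {1..length \<sigma> - 1}"
  then obtain idx where len: "length idx = length \<sigma>" and bound: "\<forall>i\<in>set idx. i < length \<pi>"
    and iso: "order_iso (map ((!) \<pi>) idx) \<sigma>"
    and adj: "\<forall>x\<in>{1..length idx - 1}. idx!x = idx!(x-1) + 1"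
    unfolding contains_vinc_def by auto
  show "consec_occurs \<pi> \<sigma>"
  proof (cases "\<sigma> = []")
    case True
    then show ?thesis unfolding consec_occurs_def by (auto simp: order_iso_def)
  next
    case False
    define i where "i = idx!0"
    have idx: "idx = [i..<i + length \<sigma>]"
      using upt_if_consecutive[OF adj] len unfolding i_def by simp
    have "i + (length \<sigma> - 1) < length \<pi>"
      using bound False unfolding idx by simp
    then have window: "i + length \<sigma> \<le> length \<pi>" using False by simp
    with iso show ?thesis
      unfolding consec_occurs_def idx map_nth_upt_window[OF window] by blast
  qed
next
  assume "consec_occurs \<pi> \<sigma>"
  then obtain i where window: "i + length \<sigma> \<le> length \<pi>"
    and iso: "order_iso (take (length \<sigma>) (drop i \<pi>)) \<sigma>"
    unfolding consec_occurs_def by blast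
  show "contains_vinc \<pi> \<sigma> {1..length \<sigma> - 1}"
    unfolding contains_vinc_def
    by (rule exI[of _ "[i..<i + length \<sigma>]"])
       (use window iso map_nth_upt_window[OF window] in auto)
qed

lemma order_iso_map_mono:
  assumes "\<forall>x\<in>set zs. \<forall>y\<in>set zs. (h x < h y) = (x < y)"
  shows "order_iso (map h zs) s = order_iso zs s"
  using assms unfolding order_iso_def by (auto simp: nth_mem)

lemma consec_occurs_map_mono:
  assumes "\<forall>x\<in>set zs. \<forall>y\<in>set zs. (h x < h y) = (x < y)"
  shows "consec_occurs (map h zs) \<sigma> = consec_occurs zs \<sigma>"
proof -
  have "set (take (length \<sigma>) (drop i zs)) \<subseteq> set zs" for i
    by (meson order_trans set_drop_subset set_take_subset)
  then have "order_iso (take (length \<sigma>) (drop i (map h zs))) \<sigma>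
               = order_iso (take (length \<sigma>) (drop i zs)) \<sigma>" for i
    unfolding drop_map take_map using assms by (intro order_iso_map_mono) blast
  then show ?thesis unfolding consec_occurs_def by simp
qed

lemma consec_occurs_Cons:
  "consec_occurs (a # ys) \<sigma> \<longleftrightarrow>
     (length \<sigma> \<le> Suc (length ys) \<and> order_iso (take (length \<sigma>) (a # ys)) \<sigma>) \<or> consec_occurs ys \<sigma>"
proof
  assume "consec_occurs (a # ys) \<sigma>"
  then obtain i where "i + length \<sigma> \<le> length (a # ys)"
    and "order_iso (take (length \<sigma>) (drop i (a # ys))) \<sigma>"
    unfolding consec_occurs_def by blast
  then show "(length \<sigma> \<le> Suc (length ys) \<and> order_iso (take (length \<sigma>) (a # ys)) \<sigma>)
               \<or> consec_occurs ys \<sigma>"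
    unfolding consec_occurs_def by (cases i) auto
next
  assume "(length \<sigma> \<le> Suc (length ys) \<and> order_iso (take (length \<sigma>) (a # ys)) \<sigma>)
            \<or> consec_occurs ys \<sigma>"
  then show "consec_occurs (a # ys) \<sigma>"
  proof
    assume "length \<sigma> \<le> Suc (length ys) \<and> order_iso (take (length \<sigma>) (a # ys)) \<sigma>"
    then show ?thesis unfolding consec_occurs_def by (intro exI[of _ 0]) simp
  next
    assume "consec_occurs ys \<sigma>"
    then obtain i where "i + length \<sigma> \<le> length ys"
      and "order_iso (take (length \<sigma>) (drop i ys)) \<sigma>"
      unfolding consec_occurs_def by blast
    then show ?thesis unfolding consec_occurs_def by (intro exI[of _ "Suc i"]) simp
  qed
qed

(* Standardization after deleting the letter a, and its inverse, re-inserting a. *)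
definition shift_down :: "nat \<Rightarrow> nat \<Rightarrow> nat" where
  "shift_down a b = (if a < b then b - 1 else b)"

definition shift_up :: "nat \<Rightarrow> nat \<Rightarrow> nat" where
  "shift_up a b = (if a \<le> b then b + 1 else b)"

lemma shift_down_up [simp]: "shift_down a (shift_up a b) = b"
  unfolding shift_down_def shift_up_def by auto

lemma shift_up_down: "b \<noteq> a \<Longrightarrow> shift_up a (shift_down a b) = b"
  unfolding shift_down_def shift_up_def by auto

lemma shift_down_less_iff:
  "x \<noteq> a \<Longrightarrow> y \<noteq> a \<Longrightarrow> (shift_down a x < shift_down a y) = (x < y)"
  unfolding shift_down_def by auto

lemma shift_up_less_iff: "(shift_up a x < shift_up a y) = (x < y)"
  unfolding shift_up_def by auto

lemma map_shift_up_down: "a \<notin> set xs \<Longrightarrow> map (shift_up a) (map (shift_down a) xs) = xs"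
  by (induction xs) (auto simp: shift_up_down)

lemma del_first: "del {1} (a # ys) = map (shift_down a) ys"
proof -
  have positions: "[0..<length (a # ys)] = 0 # map Suc [0..<length ys]"
    by (simp add: map_Suc_upt upt_conv_Cons del: upt_Suc)
  have kept: "[(a # ys)!i. i \<leftarrow> [0..<length (a # ys)], Suc i \<notin> {1}] = ys"
    unfolding positions by (simp add: comp_def map_nth)
  have gone: "[(a # ys)!i. i \<leftarrow> [0..<length (a # ys)], Suc i \<in> {1}] = [a]"
    unfolding positions by (simp add: comp_def concat_eq_Nil_conv)
  show ?thesis unfolding del_def Let_def kept gone by (simp add: shift_down_def)
qed

lemma del_nothing: "del {} = id"
  unfolding del_def Let_def by (simp add: fun_eq_iff map_nth map_replicate_const)

lemma is_perm_length: "is_perm n p \<Longrightarrow> length p = n"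
  unfolding is_perm_def by (metis card_atLeastAtMost diff_Suc_1 distinct_card)

lemma shift_down_bij:
  "a \<in> {1..n} \<Longrightarrow> bij_betw (shift_down a) ({1..n} - {a}) {1..n-1}"
  by (rule bij_betw_byWitness[where f' = "shift_up a"])
     (auto simp: shift_down_def shift_up_def)

lemma shift_up_bij:
  "a \<in> {1..n} \<Longrightarrow> bij_betw (shift_up a) {1..n-1} ({1..n} - {a})"
  by (rule bij_betw_byWitness[where f' = "shift_down a"])
     (auto simp: shift_down_def shift_up_def)

lemma is_perm_Cons_down:
  assumes "is_perm n (a # ys)"
  shows "is_perm (n - 1) (map (shift_down a) ys)"
proof -
  have a: "a \<in> {1..n}" and ys: "distinct ys" "set ys = {1..n} - {a}"
    using assms unfolding is_perm_def by auto
  with shift_down_bij[OF a] show ?thesis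
    unfolding is_perm_def bij_betw_def by (simp add: distinct_map)
qed

lemma is_perm_Cons_up:
  assumes "is_perm (n - 1) ys" and a: "a \<in> {1..n}"
  shows "is_perm n (a # map (shift_up a) ys)"
proof -
  have ys: "distinct ys" "set ys = {1..n-1}"
    using assms unfolding is_perm_def by auto
  with shift_up_bij[OF a] a show ?thesis
    unfolding is_perm_def bij_betw_def by (auto simp: distinct_map)
qed

abbreviation consec :: "nat list \<Rightarrow> (nat list \<times> nat set) set" where
  "consec \<sigma> \<equiv> {(\<sigma>, {1..length \<sigma> - 1})}"

lemma avoids_consec: "avoids (consec \<sigma>) \<pi> \<longleftrightarrow> \<not> consec_occurs \<pi> \<sigma>"
  unfolding avoids_def contains_consec_iff[symmetric] by blast

lemma SnB_Cons_prefix: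
  assumes "\<pi> \<in> SnB B n (a # ws)"
  obtains ys where "\<pi> = a # ys" and "take (length ws) ys = ws"
  using assms unfolding SnB_def by (cases \<pi>) auto

(* Deleting the first entry maps S_n^B(p;w) into S_(n-1)^B(d_1 p; d_1 w): the reduction
   of an avoiding permutation avoids sigma, since its windows are reductions of windows of pi. *)
lemma del_first_mem_SnB:
  assumes "\<pi> \<in> SnB (consec \<sigma>) n (a # ws)"
  shows "del {1} \<pi> \<in> SnB (consec \<sigma>) (n - 1) (map (shift_down a) ws)"
proof -
  obtain ys where \<pi>: "\<pi> = a # ys" and prefix: "take (length ws) ys = ws"
    using assms by (rule SnB_Cons_prefix)
  have perm: "is_perm n (a # ys)" and avoid: "\<not> consec_occurs (a # ys) \<sigma>"
    using assms unfolding \<pi> SnB_def avoids_consec by auto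
  have "a \<notin> set ys" using perm unfolding is_perm_def by simp
  then have "consec_occurs (map (shift_down a) ys) \<sigma> = consec_occurs ys \<sigma>"
    by (intro consec_occurs_map_mono ballI shift_down_less_iff) auto
  with avoid have "\<not> consec_occurs (map (shift_down a) ys) \<sigma>"
    by (simp add: consec_occurs_Cons)
  with is_perm_Cons_down[OF perm] prefix show ?thesis
    unfolding \<pi> del_first SnB_def avoids_consec by (simp add: take_map)
qed

lemma insert_first_mem_SnB:
  assumes window: "length \<sigma> \<le> Suc (length ws)"
    and fresh: "\<not> order_iso (take (length \<sigma>) (a # ws)) \<sigma>"
    and a: "a \<in> {1..n}" "a \<notin> set ws"
    and \<pi>': "\<pi>' \<in> SnB (consec \<sigma>) (n - 1) (map (shift_down a) ws)"
  shows "a # map (shift_up a) \<pi>' \<in> SnB (consec \<sigma>) n (a # ws)"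
proof -
  have perm: "is_perm (n - 1) \<pi>'" and avoid: "\<not> consec_occurs \<pi>' \<sigma>"
    and prefix': "take (length ws) \<pi>' = map (shift_down a) ws"
    using \<pi>' unfolding SnB_def avoids_consec by auto
  have prefix: "take (length ws) (map (shift_up a) \<pi>') = ws"
    using prefix' a(2) by (simp add: take_map map_shift_up_down del: map_map)
  then have "take (length \<sigma>) (a # map (shift_up a) \<pi>') = take (length \<sigma>) (a # ws)"
    using window by (metis min.absorb1 take_Suc_Cons take_take)
  moreover have "consec_occurs (map (shift_up a) \<pi>') \<sigma> = consec_occurs \<pi>' \<sigma>"
    by (intro consec_occurs_map_mono) (simp add: shift_up_less_iff)
  ultimately have "\<not> consec_occurs (a # map (shift_up a) \<pi>') \<sigma>"
    using fresh avoid by (simp add: consec_occurs_Cons)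
  with is_perm_Cons_up[OF perm a(1)] prefix show ?thesis
    unfolding SnB_def avoids_consec by simp
qed

lemma del_first_bij:
  assumes window: "length \<sigma> \<le> Suc (length ws)"
    and fresh: "\<not> order_iso (take (length \<sigma>) (a # ws)) \<sigma>"
    and w: "distinct (a # ws)" "set (a # ws) \<subseteq> {1..n}"
  shows "bij_betw (del {1}) (SnB (consec \<sigma>) n (a # ws))
                            (SnB (consec \<sigma>) (n - 1) (del {1} (a # ws)))"
proof (rule bij_betw_byWitness[where f' = "\<lambda>\<pi>'. a # map (shift_up a) \<pi>'"])
  show "\<forall>\<pi>\<in>SnB (consec \<sigma>) n (a # ws). a # map (shift_up a) (del {1} \<pi>) = \<pi>"
  proof
    fix \<pi> assume \<pi>: "\<pi> \<in> SnB (consec \<sigma>) n (a # ws)"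
    then obtain ys where ys: "\<pi> = a # ys" by (rule SnB_Cons_prefix)
    with \<pi> have "a \<notin> set ys" unfolding SnB_def is_perm_def by simp
    then show "a # map (shift_up a) (del {1} \<pi>) = \<pi>"
      unfolding ys del_first by (simp add: map_shift_up_down del: map_map)
  qed
  show "\<forall>\<pi>'\<in>SnB (consec \<sigma>) (n - 1) (del {1} (a # ws)). del {1} (a # map (shift_up a) \<pi>') = \<pi>'"
    unfolding del_first by (simp add: comp_def)
  show "del {1} ` SnB (consec \<sigma>) n (a # ws) \<subseteq> SnB (consec \<sigma>) (n - 1) (del {1} (a # ws))"
    unfolding del_first using del_first_mem_SnB by blast
  show "(\<lambda>\<pi>'. a # map (shift_up a) \<pi>') ` SnB (consec \<sigma>) (n - 1) (del {1} (a # ws))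
          \<subseteq> SnB (consec \<sigma>) n (a # ws)"
    unfolding del_first using insert_first_mem_SnB[OF window fresh] w by auto
qed

lemma rev_deletable_nothing: "rev_deletable B p {}"
  unfolding rev_deletable_def by (simp add: del_nothing)

(* Key fact: {1} is reversibly deletable for every prefix pattern of length >= |sigma|.
   If S_n^B(p;w) is nonempty, the initial window of w cannot be an occurrence of sigma. *)
lemma rev_deletable_first:
  assumes long: "length \<sigma> \<le> length p" and "p \<noteq> []"
  shows "rev_deletable (consec \<sigma>) p {1}"
  unfolding rev_deletable_def
proof (intro conjI allI impI)
  show "{1} \<subseteq> {1..length p}" using \<open>p \<noteq> []\<close> by (simp add: Suc_le_eq)
  fix n w assume "admissible n p w \<and> SnB (consec \<sigma>) n w \<noteq> {}"
  then have w: "length w = length p" "distinct w" "set w \<subseteq> {1..n}"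
    and "SnB (consec \<sigma>) n w \<noteq> {}" unfolding admissible_def by auto
  then obtain \<pi> where \<pi>: "is_perm n \<pi>" "\<not> consec_occurs \<pi> \<sigma>" "take (length w) \<pi> = w"
    unfolding SnB_def avoids_consec by auto
  have "length w \<le> length \<pi>" using \<pi>(3) by (metis length_take min.cobounded2 min.commute)
  then have "take (length \<sigma>) \<pi> = take (length \<sigma>) w"
    using \<pi>(3) long w(1) by (metis min.absorb1 take_take)
  moreover have "length \<sigma> \<le> length \<pi>" using long w(1) \<open>length w \<le> length \<pi>\<close> by simp
  ultimately have fresh: "\<not> order_iso (take (length \<sigma>) w) \<sigma>"
    using \<pi>(2) unfolding consec_occurs_def by (metis add_0 drop0)
  obtain a ws where "w = a # ws" using w(1) \<open>p \<noteq> []\<close> by (cases w) auto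
  with del_first_bij[of \<sigma> ws a n] long fresh w
  show "bij_betw (del {1}) (SnB (consec \<sigma>) n w) (SnB (consec \<sigma>) (n - card {1::nat}) (del {1} w))"
    by simp
qed

definition consec_scheme :: "nat \<Rightarrow> (nat list \<times> nat list set \<times> nat set) set" where
  "consec_scheme t =
     {(p, {}, {}) | p. is_perm (length p) p \<and> length p < t} \<union>
     {(p, {}, {1}) | p. is_perm (length p) p \<and> length p = t}"

lemma consec_scheme_mem:
  "(p, G, R) \<in> consec_scheme t \<longleftrightarrow>
     is_perm (length p) p \<and> G = {} \<and> (length p < t \<and> R = {} \<or> length p = t \<and> R = {1})"
  unfolding consec_scheme_def by auto

lemma finite_consec_scheme: "finite (consec_scheme t)"
proof (rule finite_subset)
  show "consec_scheme t \<subseteq> {p. set p \<subseteq> {1..t} \<and> length p \<le> t} \<times> {{}} \<times> {{}, {1}}"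
    unfolding consec_scheme_def is_perm_def by auto
  show "finite ({p. set p \<subseteq> {1..t} \<and> length p \<le> t} \<times> {{}} \<times> {{}, {1::nat}})"
    using finite_lists_length_le[of "{1..t}" t] by simp
qed

lemma scheme_depth_consec_scheme:
  assumes "1 \<le> t"
  shows "scheme_depth (consec_scheme t) = t"
  unfolding scheme_depth_def
proof (rule Max_eqI)
  show "finite ((\<lambda>(p, G, R). length p) ` consec_scheme t)"
    using finite_consec_scheme by simp
  show "l \<le> t" if "l \<in> (\<lambda>(p, G, R). length p) ` consec_scheme t" for l
    using that unfolding consec_scheme_def by auto
  have "is_perm t [1..<Suc t]"
    unfolding is_perm_def by (simp add: atLeastLessThanSuc_atLeastAtMost del: upt_Suc)
  then have "([1..<Suc t], {}, {1}) \<in> consec_scheme t"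
    by (simp add: consec_scheme_mem del: upt_Suc)
  then show "t \<in> (\<lambda>(p, G, R). length p) ` consec_scheme t" by force
qed

lemma is_perm_del_first:
  assumes "is_perm (length p) p" and "p \<noteq> []"
  shows "is_perm (length (del {1} p)) (del {1} p)" and "length (del {1} p) = length p - 1"
proof -
  obtain a ys where p: "p = a # ys" using \<open>p \<noteq> []\<close> by (cases p) auto
  show "length (del {1} p) = length p - 1" unfolding p del_first by simp
  then show "is_perm (length (del {1} p)) (del {1} p)"
    using is_perm_Cons_down[of "length p" a ys] assms(1) unfolding p del_first by simp
qed

lemma enum_scheme_consec_scheme:
  assumes "\<sigma> \<noteq> []"
  shows "enum_scheme (consec \<sigma>) (consec_scheme (length \<sigma>))"
proof -
  let ?E = "consec_scheme (length \<sigma>)"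
  have nonempty: "p \<noteq> []" if "length p = length \<sigma>" for p :: "nat list"
    using that assms by auto
  have deletable: "rev_deletable (consec \<sigma>) p R" if "(p, G, R) \<in> ?E" for p G R
    using that nonempty[of p] rev_deletable_nothing rev_deletable_first[of \<sigma> p]
    unfolding consec_scheme_mem by auto
  have children: "\<exists>G' R'. (p', G', R') \<in> ?E"
    if "(p, G, {}) \<in> ?E" and "is_child p p'" for p G p'
  proof -
    have "length p < length \<sigma>" using that(1) unfolding consec_scheme_mem by simp
    moreover have "is_perm (length p') p'" and "length p' = length p + 1"
      using that(2) is_perm_length unfolding is_child_def by auto
    ultimately show ?thesis unfolding consec_scheme_mem by (cases "length p' < length \<sigma>") auto
  qed
  have deletion: "\<exists>G' R'. (del R p, G', R') \<in> ?E" if "(p, G, R) \<in> ?E" and "R \<noteq> {}" for p G R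
  proof -
    have "R = {1}" "is_perm (length p) p" "length p = length \<sigma>"
      using that unfolding consec_scheme_mem by auto
    with nonempty[of p] is_perm_del_first[of p] assms have "(del R p, {}, {}) \<in> ?E"
      unfolding consec_scheme_mem by simp
    then show ?thesis by blast
  qed
  show ?thesis
    unfolding enum_scheme_def
  proof (intro conjI)
    show "([], {}, {}) \<in> ?E" using assms unfolding consec_scheme_mem is_perm_def by simp
    show "\<forall>(p, G, R)\<in>?E. is_perm (length p) p \<and> (\<forall>v\<in>G. is_gap_vector (consec \<sigma>) p v)
            \<and> rev_deletable (consec \<sigma>) p R"
      using deletable by (auto simp: consec_scheme_mem)
    show "\<forall>(p, G, R)\<in>?E. R = {} \<and> replicate (length p + 1) 0 \<notin> G \<longrightarrow>
            (\<forall>p'. is_child p p' \<longrightarrow> (\<exists>G' R'. (p', G', R') \<in> ?E))"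
      using children by blast
    show "\<forall>(p, G, R)\<in>?E. R \<noteq> {} \<longrightarrow> (\<exists>G' R'. (del R p, G', R') \<in> ?E)"
      using deletion by blast
  qed
qed

theorem mainTheorem4:
  fixes t :: nat and \<sigma> :: "nat list"
  assumes "1 \<le> t" and "is_perm t \<sigma>"
  shows "\<exists>E. finite E \<and> enum_scheme {(\<sigma>, {1..t-1})} E \<and> scheme_depth E = t \<and>
           (\<forall>(p,G,R)\<in>E. R = {} \<or> R = {1})"
proof -
  have t: "t = length \<sigma>" using is_perm_length[OF assms(2)] by simp
  with assms(1) have "\<sigma> \<noteq> []" by auto
  have "\<forall>(p, G, R)\<in>consec_scheme t. R = {} \<or> R = {1}"
    by (auto simp: consec_scheme_mem)
  with finite_consec_scheme enum_scheme_consec_scheme[OF \<open>\<sigma> \<noteq> []\<close>]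
    scheme_depth_consec_scheme[OF assms(1)]
  show ?thesis unfolding t by blast
qed

end
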